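(* The continued fraction \[ 8+\cfrac{8}{11-\cfrac{9}{24-\cfrac{25}{36-\cfrac{49}{48-\cdots}}}}, \] i.e. with $a(0)=8$, $a(1)=11$, $a(n)=12n$ for $n\ge2$, $b(0)=8$, $b(n)=-(2n+1)^2$ for $n\ge1$, converges to $\big(\Gamma(1/4)/\Gamma(3/4)\big)^2$. Moreover, with $p(n)/q(n)$ its $n$-th convergent, as $n\to\infty$ \[ \Big(\frac{\Gamma(1/4)}{\Gamma(3/4)}\Big)^2-\frac{p(n)}{q(n)}\sim\frac{4(\Gamma(1/4)/\Gamma(3/4))^2}{(1+\sqrt2)^{4n+4}}. \]
   Context: For sequences $a(n),b(n)$, the continued fraction is $a(0)+\cfrac{b(0)}{a(1)+\cfrac{b(1)}{a(2)+\cdots}}$ and its $n$-th convergent $p(n)/q(n)$ is the truncation ending with $b(n-1)/a(n)$. *)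

theory Defs
  imports "HOL-Analysis.Analysis"
begin

text \<open>The n-th convergent of the continued fraction
  a(0) + b(0)/(a(1) + b(1)/(a(2) + ...)), i.e. the truncation ending with b(n-1)/a(n).\<close>
fun cf_convergent :: "(nat \<Rightarrow> real) \<Rightarrow> (nat \<Rightarrow> real) \<Rightarrow> nat \<Rightarrow> real" where
  "cf_convergent a b 0 = a 0"
| "cf_convergent a b (Suc n) = a 0 + b 0 / cf_convergent (\<lambda>i. a (Suc i)) (\<lambda>i. b (Suc i)) n"

definition cf_a :: "nat \<Rightarrow> real" where
  "cf_a n = (if n = 0 then 8 else if n = 1 then 11 else 12 * real n)"

definition cf_b :: "nat \<Rightarrow> real" where
  "cf_b n = (if n = 0 then 8 else - ((2 * real n + 1) ^ 2))"

end

theory Submission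
  imports Defs "HOL-Real_Asymp.Real_Asymp"
begin

text \<open>The numerators \<open>p n\<close> and denominators \<open>q n\<close> of the convergents both solve
  \<open>y (n + 2) = 12 (n + 2) y (n + 1) - (2 n + 3)\<^sup>2 y n\<close>. With \<open>xi = 3 - 2 sqrt 2 = 1 / eta\<close> and the moments
  \<open>V k = \<integral> cos t ^ (2 k) / sqrt (eta - xi cos t ^ 2)\<close> over \<open>[0, pi/2]\<close>, another solution is
  \<open>(2 n + 1)!! xi ^ (n + 1) V (n + 1)\<close>, because consecutive moments are linked by an exact derivative.
  Evaluating \<open>V 0\<close> and \<open>V 1\<close> as Beta integrals identifies it, up to the factor \<open>32 / B(3/4, 1/2)\<close>,
  with the remainder \<open>L q n - p n\<close>, where \<open>L = (\<Gamma>(1/4) / \<Gamma>(3/4))\<^sup>2\<close>. Comparison with the Wallis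
  integrals gives \<open>(2 n + 3) V (n + 1) V (n + 2) \<longrightarrow> pi / (2 (eta - xi))\<close>, and the Casorati determinant
  \<open>p (n + 1) q n - p n q (n + 1) = 8 ((2 n + 1)!!)\<^sup>2\<close> then yields
  \<open>L - p n / q n \<sim> 4 L xi ^ (2 n + 2) = 4 L / (1 + sqrt 2) ^ (4 n + 4)\<close>.\<close>

fun cf_num :: "(nat \<Rightarrow> real) \<Rightarrow> (nat \<Rightarrow> real) \<Rightarrow> nat \<Rightarrow> real" where
  "cf_num a b 0 = a 0"
| "cf_num a b (Suc 0) = a 1 * a 0 + b 0"
| "cf_num a b (Suc (Suc n)) = a (n + 2) * cf_num a b (Suc n) + b (n + 1) * cf_num a b n"

fun cf_den :: "(nat \<Rightarrow> real) \<Rightarrow> (nat \<Rightarrow> real) \<Rightarrow> nat \<Rightarrow> real" where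
  "cf_den a b 0 = 1"
| "cf_den a b (Suc 0) = a 1"
| "cf_den a b (Suc (Suc n)) = a (n + 2) * cf_den a b (Suc n) + b (n + 1) * cf_den a b n"

lemma cf_num_den_Suc:
  "cf_num a b (Suc n) = a 0 * cf_num (\<lambda>i. a (Suc i)) (\<lambda>i. b (Suc i)) n
                        + b 0 * cf_den (\<lambda>i. a (Suc i)) (\<lambda>i. b (Suc i)) n
   \<and> cf_den a b (Suc n) = cf_num (\<lambda>i. a (Suc i)) (\<lambda>i. b (Suc i)) n"
  by (induction n rule: induct_nat_012) (simp_all add: algebra_simps)

lemma cf_convergent_eq_num_div_den:
  assumes "\<And>j. 0 < j \<Longrightarrow> j \<le> n \<Longrightarrow> cf_num (\<lambda>i. a (i + j)) (\<lambda>i. b (i + j)) (n - j) \<noteq> 0"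
  shows "cf_convergent a b n = cf_num a b n / cf_den a b n"
  using assms
proof (induction n arbitrary: a b)
  case 0
  then show ?case by simp
next
  case (Suc n)
  let ?a = "\<lambda>i. a (Suc i)" and ?b = "\<lambda>i. b (Suc i)"
  have tail: "cf_convergent ?a ?b n = cf_num ?a ?b n / cf_den ?a ?b n"
  proof (rule Suc.IH)
    fix j :: nat assume "0 < j" "j \<le> n"
    then show "cf_num (\<lambda>i. ?a (i + j)) (\<lambda>i. ?b (i + j)) (n - j) \<noteq> 0"
      using Suc.prems[of "Suc j"] by simp
  qed
  have "cf_num ?a ?b n \<noteq> 0"
    using Suc.prems[of 1] by simp
  then show ?case
    using tail cf_num_den_Suc[of a b n] by (simp add: field_simps)
qed

lemma cf_num_den_det:
  "cf_num a b (Suc n) * cf_den a b n - cf_num a b n * cf_den a b (Suc n) = (-1) ^ n * (\<Prod>k\<le>n. b k)"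
proof (induction n)
  case 0
  then show ?case by simp
next
  case (Suc n)
  have "cf_num a b (Suc (Suc n)) * cf_den a b (Suc n) - cf_num a b (Suc n) * cf_den a b (Suc (Suc n))
      = - b (Suc n) * (cf_num a b (Suc n) * cf_den a b n - cf_num a b n * cf_den a b (Suc n))"
    by (simp add: algebra_simps)
  then show ?case
    using Suc.IH by simp
qed

lemma second_order_recurrence_unique:
  fixes f g :: "nat \<Rightarrow> 'a::ring"
  assumes "f 0 = g 0" "f (Suc 0) = g (Suc 0)"
    and "\<And>n. f (Suc (Suc n)) = \<alpha> n * f (Suc n) + \<beta> n * f n"
    and "\<And>n. g (Suc (Suc n)) = \<alpha> n * g (Suc n) + \<beta> n * g n"
  shows "f n = g n"
  by (induction n rule: induct_nat_012) (simp_all add: assms)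

abbreviation cf_tail_num :: "nat \<Rightarrow> nat \<Rightarrow> real" where
  "cf_tail_num j \<equiv> cf_num (\<lambda>i. cf_a (i + j)) (\<lambda>i. cf_b (i + j))"

lemma cf_tail_num_growth:
  assumes "0 < j"
  shows "cf_tail_num j n > 0 \<and> cf_tail_num j (Suc n) \<ge> (2 * real (n + j) + 3) * cf_tail_num j n"
proof (induction n)
  case 0
  have a0: "cf_a j \<ge> 11 * real j" and a1: "cf_a (Suc j) = 12 * (real j + 1)"
    and b0: "cf_b j = - ((2 * real j + 1)^2)"
    using assms by (auto simp: cf_a_def cf_b_def)
  have "(10 * real j + 9) * (11 * real j) - (2 * real j + 1)^2 = 106 * (real j * real j) + 95 * real j - 1"
    by (simp add: power2_eq_square algebra_simps)
  moreover have "real j \<ge> 1"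
    using assms by simp
  ultimately have "(2 * real j + 1)^2 \<le> (10 * real j + 9) * (11 * real j)"
    using mult_nonneg_nonneg[of "real j" "real j"] by linarith
  also have "\<dots> \<le> (10 * real j + 9) * cf_a j"
    using a0 by (intro mult_left_mono) auto
  finally show ?case
    using a0 a1 b0 assms by (simp add: algebra_simps)
next
  case (Suc m)
  define x y where "x = cf_tail_num j m" and "y = cf_tail_num j (Suc m)"
  have x: "x > 0" and y: "y \<ge> (2 * real m + 2 * real j + 3) * x"
    using Suc.IH by (auto simp: x_def y_def)
  have ypos: "y > 0"
    using x y by (smt (verit) mult_pos_pos of_nat_0_le_iff)
  have "cf_tail_num j (Suc (Suc m)) = 12 * (real m + real j + 2) * y - (2 * real m + 2 * real j + 3)^2 * x"
    using assms by (simp add: x_def y_def cf_a_def cf_b_def algebra_simps)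
  also have "\<dots> \<ge> (12 * (real m + real j + 2) - (2 * real m + 2 * real j + 3)) * y"
  proof -
    have "(2 * real m + 2 * real j + 3)^2 * x \<le> (2 * real m + 2 * real j + 3) * y"
      using y by (simp add: power2_eq_square mult.assoc mult_left_mono)
    then show ?thesis by (simp add: algebra_simps)
  qed
  finally have "cf_tail_num j (Suc (Suc m)) \<ge> (2 * real (Suc m + j) + 3) * y"
    using ypos by (smt (verit) mult_right_mono of_nat_0_le_iff of_nat_add of_nat_Suc)
  then show ?case
    using ypos by (simp add: y_def)
qed

abbreviation cf_p :: "nat \<Rightarrow> real" where "cf_p \<equiv> cf_num cf_a cf_b"
abbreviation cf_q :: "nat \<Rightarrow> real" where "cf_q \<equiv> cf_den cf_a cf_b"

lemma cf_q_pos: "cf_q n > 0"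
  using cf_num_den_Suc[of cf_a cf_b "n - 1"] cf_tail_num_growth[of 1 "n - 1"]
  by (cases n) simp_all

lemma cf_convergent_eq: "cf_convergent cf_a cf_b n = cf_p n / cf_q n"
  using cf_tail_num_growth by (intro cf_convergent_eq_num_div_den) (metis less_irrefl)

lemma cf_p_rec: "cf_p (Suc (Suc n)) = 12 * (real n + 2) * cf_p (Suc n) - (2 * real n + 3)^2 * cf_p n"
  and cf_q_rec: "cf_q (Suc (Suc n)) = 12 * (real n + 2) * cf_q (Suc n) - (2 * real n + 3)^2 * cf_q n"
  by (simp_all add: cf_a_def cf_b_def algebra_simps)

definition odd_prod :: "nat \<Rightarrow> real" where
  "odd_prod n = (\<Prod>j=1..n. 2 * real j + 1)"

lemma odd_prod_0: "odd_prod 0 = 1"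
  by (simp add: odd_prod_def)

lemma odd_prod_Suc: "odd_prod (Suc n) = odd_prod n * (2 * real n + 3)"
  unfolding odd_prod_def by (subst prod.cl_ivl_Suc) (simp add: algebra_simps)

lemma odd_prod_pos: "odd_prod n > 0"
  unfolding odd_prod_def by (rule prod_pos) (auto simp: add_pos_nonneg)

lemma cf_det: "cf_p (Suc n) * cf_q n - cf_p n * cf_q (Suc n) = 8 * odd_prod n ^ 2"
proof -
  have "(-1) ^ n * (\<Prod>k\<le>n. cf_b k) = 8 * odd_prod n ^ 2"
  proof (induction n)
    case 0
    then show ?case by (simp add: odd_prod_0 cf_b_def)
  next
    case (Suc n)
    have "(-1) ^ Suc n * (\<Prod>k\<le>Suc n. cf_b k) = (2 * real n + 3)^2 * ((-1) ^ n * (\<Prod>k\<le>n. cf_b k))"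
      by (simp add: cf_b_def algebra_simps)
    then show ?case
      using Suc.IH by (simp add: odd_prod_Suc power_mult_distrib)
  qed
  then show ?thesis
    using cf_num_den_det by simp
qed

lemma fundamental_theorem_of_calculus_zero:
  fixes F f :: "real \<Rightarrow> real"
  assumes "a \<le> b" "\<And>x. (F has_real_derivative f x) (at x)" "F a = 0" "F b = 0"
  shows "(f has_integral 0) {a..b}"
proof -
  have "(f has_integral (F b - F a)) {a..b}"
    using assms(1) by (intro fundamental_theorem_of_calculus)
      (auto simp: has_real_derivative_iff_has_vector_derivative[symmetric]
            intro: has_field_derivative_at_within assms(2))
  then show ?thesis
    using assms by simp
qed

definition wallis :: "nat \<Rightarrow> real" where
  "wallis m = integral {0..pi/2} (\<lambda>t. cos t ^ m)"

lemma wallis_has_integral: "((\<lambda>t. cos t ^ m) has_integral wallis m) {0..pi/2}"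
  unfolding wallis_def by (intro integrable_integral integrable_continuous_interval continuous_intros)

lemma wallis_Suc_Suc: "wallis (Suc (Suc m)) = (real m + 1) / (real m + 2) * wallis m"
proof -
  have trig: "(1 + real m) * (- s * 1 * p) * s + c * 1 * (c * p) = (real m + 2) * (c * (c * p)) - (real m + 1) * p"
    if "c * c + s * s = 1" for c s p :: real
    using that by algebra
  have deriv: "((\<lambda>t. cos t ^ Suc m * sin t) has_real_derivative
           (real m + 2) * cos x ^ Suc (Suc m) - (real m + 1) * cos x ^ m) (at x)" for x
    apply (rule derivative_eq_intros refl)+
    apply (simp only: power_Suc diff_Suc_Suc diff_zero of_nat_Suc)
    apply (rule trig[OF sin_cos_squared_add3])
    done
  have "((\<lambda>x. (real m + 2) * cos x ^ Suc (Suc m) - (real m + 1) * cos x ^ m) has_integral 0) {0..pi/2}"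
    by (rule fundamental_theorem_of_calculus_zero[OF _ deriv]) auto
  moreover have "((\<lambda>x. (real m + 2) * cos x ^ Suc (Suc m) - (real m + 1) * cos x ^ m) has_integral
      (real m + 2) * wallis (Suc (Suc m)) - (real m + 1) * wallis m) {0..pi/2}"
    by (intro has_integral_diff has_integral_mult_right wallis_has_integral)
  ultimately have "(real m + 2) * wallis (Suc (Suc m)) - (real m + 1) * wallis m = 0"
    using has_integral_unique by blast
  then show ?thesis
    by (simp add: field_simps)
qed

lemma wallis_0: "wallis 0 = pi/2"
proof -
  have "((\<lambda>t. 1) has_integral pi/2) {0..pi/2}"
    using has_integral_const_real[of "1::real" 0 "pi/2"] by simp
  then have "((\<lambda>t. cos t ^ 0) has_integral pi/2) {0..pi/2}"
    by simp
  then show ?thesis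
    using has_integral_unique[OF wallis_has_integral] by blast
qed

lemma wallis_1: "wallis 1 = 1"
proof -
  have "(cos has_integral (sin (pi/2) - sin 0)) {0..pi/2}"
    by (intro fundamental_theorem_of_calculus)
       (auto simp: has_real_derivative_iff_has_vector_derivative[symmetric] intro!: derivative_eq_intros)
  then show ?thesis
    using wallis_has_integral[of 1] by (simp add: has_integral_unique)
qed

lemma wallis_pos: "wallis m > 0"
  by (induction m rule: induct_nat_012) (simp_all add: wallis_0 wallis_Suc_Suc wallis_1[simplified])

lemma wallis_Suc_le: "wallis (Suc m) \<le> wallis m"
  unfolding wallis_def
proof (rule integral_le)
  show "(\<lambda>t. cos t ^ Suc m) integrable_on {0..pi/2}" "(\<lambda>t. cos t ^ m) integrable_on {0..pi/2}"
    using wallis_has_integral by blast+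
  fix x assume "x \<in> {0..pi/2}"
  then have "0 \<le> cos x" "cos x \<le> 1"
    by (auto intro: cos_ge_zero)
  then show "cos x ^ Suc m \<le> cos x ^ m"
    by (simp add: mult_left_le_one_le)
qed

lemma wallis_product: "(real m + 1) * wallis m * wallis (Suc m) = pi / 2"
proof (induction m)
  case 0
  then show ?case by (simp add: wallis_0 wallis_1[simplified])
next
  case (Suc m)
  have "(real (Suc m) + 1) * wallis (Suc m) * wallis (Suc (Suc m)) = (real m + 1) * wallis m * wallis (Suc m)"
    by (simp add: wallis_Suc_Suc field_simps)
  then show ?case
    using Suc by simp
qed

text \<open>The ratio \<open>wallis (m + 2) / wallis (m + 1)\<close> is squeezed between \<open>(m + 1) / (m + 2)\<close> and \<open>1\<close>.\<close>
lemma wallis_product_2_limit: "(\<lambda>m. (real m + 1) * wallis m * wallis (m + 2)) \<longlonglongrightarrow> pi / 2"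
proof -
  define r where "r m = wallis (m + 2) / wallis (m + 1)" for m
  have eq: "(real m + 1) * wallis m * wallis (m + 2) = pi/2 * r m" for m
  proof -
    have "(real m + 1) * wallis m * wallis (m + 2) = r m * ((real m + 1) * wallis m * wallis (m + 1))"
      using wallis_pos[of "m + 1"] by (simp add: r_def)
    then show ?thesis
      using wallis_product[of m] by simp
  qed
  have lo: "(real m + 1) / (real m + 2) \<le> r m" for m
  proof -
    have "wallis (m + 1) \<le> wallis m"
      using wallis_Suc_le[of m] by simp
    also have "wallis m = (real m + 2) / (real m + 1) * wallis (m + 2)"
      using wallis_Suc_Suc[of m] by (simp add: field_simps)
    finally show ?thesis
      using wallis_pos[of "m + 1"] by (simp add: r_def field_simps)
  qed
  have hi: "r m \<le> 1" for m
    using wallis_Suc_le[of "m + 1"] wallis_pos[of "m + 1"] by (simp add: r_def field_simps)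
  have "(\<lambda>m. (real m + 1) / (real m + 2)) \<longlonglongrightarrow> 1"
    by real_asymp
  then have "r \<longlonglongrightarrow> 1"
    by (rule real_tendsto_sandwich[OF _ _ _ tendsto_const, rotated 2]) (auto intro!: always_eventually lo hi)
  then show ?thesis
    unfolding eq using tendsto_mult_left[of r 1 sequentially "pi/2"] by simp
qed

lemma inverse_sqrt_diff_bounds:
  fixes p q :: real
  assumes p: "0 < p" and pq: "p \<le> q"
  shows "0 \<le> 1 / sqrt p - 1 / sqrt q \<and> 1 / sqrt p - 1 / sqrt q \<le> (q - p) / (p * sqrt p)"
proof -
  define a b where "a = sqrt p" and "b = sqrt q"
  have a: "a > 0" "a * a = p" and b: "b > 0" "b * b = q" and ab: "a \<le> b"
    using p pq by (auto simp: a_def b_def)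
  have e: "1 / a - 1 / b = (b - a) / (a * b)" and e2: "b - a = (q - p) / (a + b)"
    using a b by (simp_all add: field_simps)
  have "(b - a) / (a * b) \<le> ((q - p) / a) / (a * a)"
  proof (rule frac_le)
    show "0 \<le> (q - p) / a" using a pq by simp
    show "b - a \<le> (q - p) / a" unfolding e2 using a b pq by (intro divide_left_mono) auto
    show "0 < a * a" using a(1) by simp
    show "a * a \<le> a * b" using a ab by (intro mult_left_mono) auto
  qed
  then have "1 / a - 1 / b \<le> (q - p) / (p * a)"
    unfolding e using a p by (simp add: field_simps)
  moreover have "0 \<le> 1 / a - 1 / b"
    unfolding e using a b ab by simp
  ultimately show ?thesis
    by (simp add: a_def b_def)
qed

definition xi :: real where "xi = 3 - 2 * sqrt 2"
definition eta :: real where "eta = 3 + 2 * sqrt 2"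

lemma xi_mult_eta: "xi * eta = 1"
  by (simp add: xi_def eta_def algebra_simps)

lemma xi_plus_eta: "xi + eta = 6"
  by (simp add: xi_def eta_def)

lemma xi_pos: "0 < xi"
proof -
  have "sqrt 2 < (3/2::real)"
    by (rule real_less_lsqrt) (auto simp: power2_eq_square)
  then show ?thesis by (simp add: xi_def)
qed

lemma xi_less_1: "xi < 1"
proof -
  have "sqrt 2 > (1::real)"
    by (rule real_less_rsqrt) auto
  then show ?thesis by (simp add: xi_def)
qed

lemma eta_minus_xi_pos: "eta - xi > 0"
  using xi_plus_eta xi_less_1 by simp

definition radicand :: "real \<Rightarrow> real" where
  "radicand t = eta - xi * cos t ^ 2"

lemma radicand_ge: "radicand t \<ge> eta - xi"
proof -
  have "cos t ^ 2 \<le> 1"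
    by (simp add: abs_square_le_1)
  then show ?thesis
    using xi_pos by (simp add: radicand_def mult_left_le_one_le)
qed

lemma radicand_le: "radicand t \<le> eta"
  using xi_pos by (simp add: radicand_def)

lemma radicand_pos: "radicand t > 0"
  using radicand_ge[of t] eta_minus_xi_pos by linarith

lemma radicand_nonzero [simp]: "radicand t \<noteq> 0"
  using radicand_pos[of t] by simp

lemma continuous_on_radicand [continuous_intros]: "continuous_on S radicand"
  unfolding radicand_def by (intro continuous_intros)

lemma has_real_derivative_radicand: "(radicand has_real_derivative 2 * xi * cos x * sin x) (at x)"
  unfolding radicand_def by (auto intro!: derivative_eq_intros)

lemma has_real_derivative_sqrt_radicand:
  "((\<lambda>t. sqrt (radicand t)) has_real_derivative xi * cos x * sin x / sqrt (radicand x)) (at x)"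
  by (rule DERIV_cong[OF DERIV_chain2[OF DERIV_real_sqrt[OF radicand_pos] has_real_derivative_radicand]])
     (simp add: field_simps)

definition cos_moment :: "nat \<Rightarrow> real" where
  "cos_moment k = integral {0..pi/2} (\<lambda>t. cos t ^ (2 * k) / sqrt (radicand t))"

lemma cos_moment_has_integral:
  "((\<lambda>t. cos t ^ (2 * k) / sqrt (radicand t)) has_integral cos_moment k) {0..pi/2}"
  unfolding cos_moment_def
  by (intro integrable_integral integrable_continuous_interval continuous_intros) auto

text \<open>The moments satisfy a three-term recurrence because the following function vanishes at both
  ends of the interval and its derivative is a combination of three consecutive integrands.\<close>
lemma cos_moment_recurrence_derivative:
  "((\<lambda>t. cos t ^ (2 * n + 1) * sin t * sqrt (radicand t)) has_real_derivative
     - (((2 * real n + 1) * eta * cos x ^ (2 * n) - 12 * (real n + 1) * cos x ^ (2 * n + 2)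
         + (2 * real n + 3) * xi * cos x ^ (2 * n + 4)) / sqrt (radicand x))) (at x)"
proof -
  define c s r p where "c = cos x" and "s = sin x" and "r = sqrt (radicand x)" and "p = cos x ^ (2 * n)"
  have "((\<lambda>t. cos t ^ (2 * n + 1) * sin t) has_real_derivative
      (2 * real n + 1) * p * (- s) * s + c * p * c) (at x)"
    by (rule derivative_eq_intros refl)+ (simp add: c_def s_def p_def algebra_simps)
  from DERIV_mult[OF this has_real_derivative_sqrt_radicand]
  have d: "((\<lambda>t. cos t ^ (2 * n + 1) * sin t * sqrt (radicand t)) has_real_derivative
      ((2 * real n + 1) * p * (- s) * s + c * p * c) * r + xi * c * s / r * (cos x ^ (2 * n + 1) * sin x)) (at x)"
    by (simp only: c_def s_def r_def)
  have r: "r > 0" "r * r = eta - xi * (c * c)"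
    using radicand_pos[of x] by (simp_all add: r_def c_def radicand_def power2_eq_square)
  have cs: "c * c + s * s = 1"
    unfolding c_def s_def by (rule sin_cos_squared_add3)
  have H: "((2 * real n + 1) * p * (- s) * s + c * p * c) * r * r + xi * c * s * (c * p * s)
      = - ((2 * real n + 1) * eta * p - 12 * (real n + 1) * (c * c * p) + (2 * real n + 3) * xi * (c * c * c * c * p))"
    using r(2) cs xi_plus_eta by algebra
  have "((2 * real n + 1) * p * (- s) * s + c * p * c) * r + xi * c * s / r * (c * p * s)
      = (((2 * real n + 1) * p * (- s) * s + c * p * c) * r * r + xi * c * s * (c * p * s)) / r"
    using r(1) by (simp add: field_simps)
  then have eq: "((2 * real n + 1) * p * (- s) * s + c * p * c) * r + xi * c * s / r * (c * p * s)
      = - (((2 * real n + 1) * eta * p - 12 * (real n + 1) * (c * c * p) + (2 * real n + 3) * xi * (c * c * c * c * p)) / r)"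
    unfolding H by (simp add: minus_divide_left)
  have pw: "cos x ^ (2 * n + 1) = c * p" "sin x = s" "cos x ^ (2 * n) = p"
    "cos x ^ (2 * n + 2) = c * c * p" "cos x ^ (2 * n + 4) = c * c * c * c * p" "sqrt (radicand x) = r"
    by (simp_all add: c_def s_def p_def r_def power_add eval_nat_numeral)
  show ?thesis
    by (rule DERIV_cong[OF d]) (unfold pw, rule eq)
qed

lemma cos_moment_recurrence:
  "(2 * real n + 1) * eta * cos_moment n - 12 * (real n + 1) * cos_moment (n + 1)
     + (2 * real n + 3) * xi * cos_moment (n + 2) = 0"
proof -
  have idx: "2 * (n + 1) = 2 * n + 2" "2 * (n + 2) = 2 * n + 4"
    by simp_all
  have "((\<lambda>x. - (((2 * real n + 1) * eta * cos x ^ (2 * n) - 12 * (real n + 1) * cos x ^ (2 * n + 2)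
         + (2 * real n + 3) * xi * cos x ^ (2 * n + 4)) / sqrt (radicand x))) has_integral 0) {0..pi/2}"
    by (rule fundamental_theorem_of_calculus_zero[OF _ cos_moment_recurrence_derivative]) auto
  moreover have "(\<lambda>x. - (((2 * real n + 1) * eta * cos x ^ (2 * n) - 12 * (real n + 1) * cos x ^ (2 * n + 2)
         + (2 * real n + 3) * xi * cos x ^ (2 * n + 4)) / sqrt (radicand x)))
      = (\<lambda>x. - ((2 * real n + 1) * eta * (cos x ^ (2 * n) / sqrt (radicand x))
         - 12 * (real n + 1) * (cos x ^ (2 * n + 2) / sqrt (radicand x))
         + (2 * real n + 3) * xi * (cos x ^ (2 * n + 4) / sqrt (radicand x))))"
    by (simp add: add_divide_distrib diff_divide_distrib algebra_simps)
  moreover have int: "((\<lambda>x. - ((2 * real n + 1) * eta * (cos x ^ (2 * n) / sqrt (radicand x))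
         - 12 * (real n + 1) * (cos x ^ (2 * n + 2) / sqrt (radicand x))
         + (2 * real n + 3) * xi * (cos x ^ (2 * n + 4) / sqrt (radicand x)))) has_integral
      - ((2 * real n + 1) * eta * cos_moment n - 12 * (real n + 1) * cos_moment (n + 1)
         + (2 * real n + 3) * xi * cos_moment (n + 2))) {0..pi/2}"
    using cos_moment_has_integral[of n] cos_moment_has_integral[of "n + 1", unfolded idx]
      cos_moment_has_integral[of "n + 2", unfolded idx]
    by (intro has_integral_neg has_integral_add has_integral_diff has_integral_mult_right)
  ultimately have "((\<lambda>x. - ((2 * real n + 1) * eta * (cos x ^ (2 * n) / sqrt (radicand x))
         - 12 * (real n + 1) * (cos x ^ (2 * n + 2) / sqrt (radicand x))
         + (2 * real n + 3) * xi * (cos x ^ (2 * n + 4) / sqrt (radicand x)))) has_integral 0) {0..pi/2}"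
    by simp
  from has_integral_unique[OF this int] show ?thesis
    by simp
qed

definition moment_scale :: real where
  "moment_scale = 1 / sqrt (eta - xi)"

lemma moment_scale_pos: "moment_scale > 0"
  using eta_minus_xi_pos by (simp add: moment_scale_def)

text \<open>Near \<open>t = 0\<close>, where \<open>cos t ^ (2 * k)\<close> concentrates, the radicand equals \<open>eta - xi\<close>.\<close>
lemma cos_moment_bounds:
  defines "M \<equiv> xi / ((eta - xi) * sqrt (eta - xi))"
  shows "0 \<le> moment_scale * wallis (2 * k) - cos_moment k
    \<and> moment_scale * wallis (2 * k) - cos_moment k \<le> M * (wallis (2 * k) - wallis (2 * k + 2))"
proof -
  have pointwise: "0 \<le> moment_scale - 1 / sqrt (radicand t)
      \<and> moment_scale - 1 / sqrt (radicand t) \<le> M * (1 - cos t ^ 2)" for t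
  proof -
    have "radicand t - (eta - xi) = xi * (1 - cos t ^ 2)"
      by (simp add: radicand_def algebra_simps)
    then show ?thesis
      using inverse_sqrt_diff_bounds[OF eta_minus_xi_pos radicand_ge[of t]]
      by (simp add: moment_scale_def M_def)
  qed
  have g: "((\<lambda>t. cos t ^ (2 * k) * (moment_scale - 1 / sqrt (radicand t)))
      has_integral moment_scale * wallis (2 * k) - cos_moment k) {0..pi/2}"
    using has_integral_diff[OF has_integral_mult_right[OF wallis_has_integral] cos_moment_has_integral]
    by (simp add: algebra_simps)
  have u: "((\<lambda>t. M * (cos t ^ (2 * k) - cos t ^ (2 * k + 2)))
      has_integral M * (wallis (2 * k) - wallis (2 * k + 2))) {0..pi/2}"
    by (intro has_integral_diff has_integral_mult_right wallis_has_integral)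
  have "0 \<le> moment_scale * wallis (2 * k) - cos_moment k"
    by (rule has_integral_nonneg[OF g]) (use pointwise in auto)
  moreover have "moment_scale * wallis (2 * k) - cos_moment k \<le> M * (wallis (2 * k) - wallis (2 * k + 2))"
  proof (rule has_integral_le[OF g u])
    fix t
    have "cos t ^ (2 * k) * (moment_scale - 1 / sqrt (radicand t)) \<le> cos t ^ (2 * k) * (M * (1 - cos t ^ 2))"
      using pointwise[of t] by (intro mult_left_mono) auto
    then show "cos t ^ (2 * k) * (moment_scale - 1 / sqrt (radicand t)) \<le> M * (cos t ^ (2 * k) - cos t ^ (2 * k + 2))"
      by (simp add: power_add power2_eq_square algebra_simps)
  qed
  ultimately show ?thesis
    by simp
qed

lemma cos_moment_asymp: "(\<lambda>k. cos_moment k / (moment_scale * wallis (2 * k))) \<longlonglongrightarrow> 1"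
proof (rule real_tendsto_sandwich[OF _ _ _ tendsto_const])
  define M where "M = xi / ((eta - xi) * sqrt (eta - xi))"
  have hw: "moment_scale * wallis (2 * k) > 0" for k
    using moment_scale_pos wallis_pos by simp
  show "\<forall>\<^sub>F k in sequentially. 1 - M / moment_scale / (2 * real k + 2) \<le> cos_moment k / (moment_scale * wallis (2 * k))"
  proof (intro always_eventually allI)
    fix k
    have "wallis (2 * k) - wallis (2 * k + 2) = wallis (2 * k) / (2 * real k + 2)"
      using wallis_Suc_Suc[of "2 * k"] by (simp add: eval_nat_numeral field_simps)
    then have bound: "moment_scale * wallis (2 * k) - cos_moment k \<le> M * (wallis (2 * k) / (2 * real k + 2))"
      using cos_moment_bounds[of k] by (simp add: M_def)
    have "1 - cos_moment k / (moment_scale * wallis (2 * k))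
        = (moment_scale * wallis (2 * k) - cos_moment k) / (moment_scale * wallis (2 * k))"
      using moment_scale_pos wallis_pos[of "2 * k"] by (simp add: diff_divide_distrib)
    also have "\<dots> \<le> M * (wallis (2 * k) / (2 * real k + 2)) / (moment_scale * wallis (2 * k))"
      using bound hw[of k] by (intro divide_right_mono) auto
    also have "\<dots> = M / moment_scale / (2 * real k + 2)"
    proof -
      have "M * (w / d) / (h * w) = M / h / d" if "w \<noteq> 0" "h \<noteq> 0" "d \<noteq> 0" for w h d :: real
        using that by (simp add: field_simps)
      then show ?thesis
        using moment_scale_pos wallis_pos[of "2 * k"] by simp
    qed
    finally show "1 - M / moment_scale / (2 * real k + 2) \<le> cos_moment k / (moment_scale * wallis (2 * k))"
      by linarith
  qed
  show "\<forall>\<^sub>F k in sequentially. cos_moment k / (moment_scale * wallis (2 * k)) \<le> 1"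
    using cos_moment_bounds hw by (intro always_eventually allI) (simp add: field_simps)
  show "(\<lambda>k. 1 - M / moment_scale / (2 * real k + 2)) \<longlonglongrightarrow> 1"
    by real_asymp
qed

lemma cos_moment_pos: "cos_moment k > 0"
proof -
  have "((\<lambda>t. cos t ^ (2 * k) / sqrt eta) has_integral wallis (2 * k) / sqrt eta) {0..pi/2}"
    using wallis_has_integral by (rule has_integral_divide)
  then have "wallis (2 * k) / sqrt eta \<le> cos_moment k"
  proof (rule has_integral_le[OF _ cos_moment_has_integral])
    fix t
    have "1 / sqrt eta \<le> 1 / sqrt (radicand t)"
      using radicand_pos[of t] radicand_le[of t] by (intro divide_left_mono) auto
    then show "cos t ^ (2 * k) / sqrt eta \<le> cos t ^ (2 * k) / sqrt (radicand t)"
      using zero_le_even_power[of "2 * k" "cos t"] by (simp add: divide_inverse mult_left_mono)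
  qed
  moreover have "wallis (2 * k) / sqrt eta > 0"
    using wallis_pos xi_pos eta_minus_xi_pos by simp
  ultimately show ?thesis
    by simp
qed

lemma cos_moment_product_limit:
  "(\<lambda>n. (2 * real n + 3) * cos_moment (n + 1) * cos_moment (n + 2)) \<longlonglongrightarrow> moment_scale^2 * (pi / 2)"
proof -
  let ?\<rho> = "\<lambda>k. cos_moment k / (moment_scale * wallis (2 * k))"
  have "((\<lambda>m. (real m + 1) * wallis m * wallis (m + 2)) \<circ> (\<lambda>n. 2 * n + 2)) \<longlonglongrightarrow> pi / 2"
    by (rule LIMSEQ_subseq_LIMSEQ[OF wallis_product_2_limit]) (simp add: strict_mono_def)
  moreover have "(\<lambda>m. (real m + 1) * wallis m * wallis (m + 2)) \<circ> (\<lambda>n. 2 * n + 2)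
      = (\<lambda>n. (2 * real n + 3) * wallis (2 * n + 2) * wallis (2 * n + 4))"
    by (simp add: o_def numeral_eq_Suc algebra_simps)
  ultimately have w: "(\<lambda>n. (2 * real n + 3) * wallis (2 * n + 2) * wallis (2 * n + 4)) \<longlonglongrightarrow> pi / 2"
    by simp
  have idx: "2 * (n + 1) = 2 * n + 2" "2 * (n + 2) = 2 * n + 4" for n :: nat
    by simp_all
  have "(\<lambda>n. ?\<rho> (n + 1) * ?\<rho> (n + 2) * moment_scale^2 * ((2 * real n + 3) * wallis (2 * n + 2) * wallis (2 * n + 4)))
      \<longlonglongrightarrow> 1 * 1 * moment_scale^2 * (pi / 2)"
    by (intro tendsto_mult w tendsto_const LIMSEQ_ignore_initial_segment[OF cos_moment_asymp])
  moreover have "?\<rho> (n + 1) * ?\<rho> (n + 2) * moment_scale^2 * ((2 * real n + 3) * wallis (2 * n + 2) * wallis (2 * n + 4))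
      = (2 * real n + 3) * cos_moment (n + 1) * cos_moment (n + 2)" for n
    unfolding idx using wallis_pos[of "2 * n + 2"] wallis_pos[of "2 * n + 4"] moment_scale_pos
    by (simp add: field_simps power2_eq_square)
  ultimately show ?thesis
    by simp
qed

definition psi_den :: "real \<Rightarrow> real" where
  "psi_den t = 1 + xi * cos t ^ 2"

text \<open>\<open>psi\<close> increases from \<open>0\<close> to \<open>1\<close> on \<open>[0, pi/2]\<close> and \<open>1 - psi t ^ 2\<close> is a square
  (\<open>one_minus_psi_sq\<close>), so substituting \<open>u = psi t ^ 2\<close> turns the Beta integrals \<open>B(a, 1/2)\<close>
  into integrals against \<open>radicand\<close>.\<close>
definition psi :: "real \<Rightarrow> real" where
  "psi t = xi * sin t ^ 2 * radicand t / psi_den t ^ 2"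

definition psi_sq_deriv :: "real \<Rightarrow> real" where
  "psi_sq_deriv t = 32 * xi * psi t * cos t * sin t * (1 - xi * cos t ^ 2) / psi_den t ^ 3"

lemma psi_den_pos: "psi_den t > 0"
  unfolding psi_den_def using xi_pos by (simp add: add_pos_nonneg)

lemma psi_den_nonzero [simp]: "psi_den t \<noteq> 0"
  using psi_den_pos[of t] by simp

lemma continuous_on_psi_den [continuous_intros]: "continuous_on S psi_den"
  unfolding psi_den_def by (intro continuous_intros)

lemma continuous_on_psi [continuous_intros]: "continuous_on S psi"
  unfolding psi_def by (intro continuous_intros) auto

lemma one_minus_xi_cos_sq_pos: "1 - xi * cos t ^ 2 > 0"
proof -
  have "xi * cos t ^ 2 \<le> xi"
    using xi_pos by (simp add: abs_square_le_1 mult_left_le_one_le)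
  then show ?thesis
    using xi_less_1 by simp
qed

lemma psi_nonneg: "psi t \<ge> 0"
  unfolding psi_def using radicand_pos[of t] xi_pos by simp

lemma has_real_derivative_psi_den: "(psi_den has_real_derivative - 2 * xi * cos x * sin x) (at x)"
  unfolding psi_den_def by (auto intro!: derivative_eq_intros)

lemma has_real_derivative_psi:
  "(psi has_real_derivative 16 * xi * cos x * sin x * (1 - xi * cos x ^ 2) / psi_den x ^ 3) (at x)"
proof -
  define c s E D where "c = cos x" and "s = sin x" and "E = radicand x" and "D = psi_den x"
  have num: "((\<lambda>t. xi * sin t ^ 2 * radicand t) has_real_derivative
      xi * (2 * s * c) * E + xi * (s * s) * (2 * xi * c * s)) (at x)"
    by (rule derivative_eq_intros refl has_real_derivative_radicand)+
      (simp add: c_def s_def E_def power2_eq_square algebra_simps)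
  have den: "((\<lambda>t. psi_den t ^ 2) has_real_derivative 2 * D * (- 2 * xi * c * s)) (at x)"
    by (rule derivative_eq_intros refl has_real_derivative_psi_den)+
      (simp add: c_def s_def D_def)
  have "(psi has_real_derivative
     ((xi * (2 * s * c) * E + xi * (s * s) * (2 * xi * c * s)) * (D * D) - xi * (s * s) * E * (2 * D * (- 2 * xi * c * s)))
       / ((D * D) * (D * D))) (at x)"
    using DERIV_divide[OF num den] unfolding psi_def[abs_def]
    by (simp add: s_def E_def D_def power2_eq_square)
  moreover have "((xi * (2 * s * c) * E + xi * (s * s) * (2 * xi * c * s)) * (D * D)
      - xi * (s * s) * E * (2 * D * (- 2 * xi * c * s))) / ((D * D) * (D * D))
    = 16 * xi * c * s * (1 - xi * (c * c)) / (D * D * D)"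
  proof -
    have "c * c + s * s = 1" "E = eta - xi * (c * c)" "D = 1 + xi * (c * c)"
      by (simp_all add: c_def s_def E_def D_def radicand_def psi_den_def power2_eq_square)
    then have H: "(xi * (2 * s * c) * E + xi * (s * s) * (2 * xi * c * s)) * D
        - xi * (s * s) * E * (2 * (- 2 * xi * c * s)) = 16 * xi * c * s * (1 - xi * (c * c))"
      using xi_mult_eta xi_plus_eta by algebra
    have "((xi * (2 * s * c) * E + xi * (s * s) * (2 * xi * c * s)) * (D * D)
        - xi * (s * s) * E * (2 * D * (- 2 * xi * c * s))) / ((D * D) * (D * D))
      = ((xi * (2 * s * c) * E + xi * (s * s) * (2 * xi * c * s)) * D
        - xi * (s * s) * E * (2 * (- 2 * xi * c * s))) / (D * D * D)"
      by (simp add: D_def field_simps)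
    then show ?thesis
      unfolding H .
  qed
  ultimately show ?thesis
    by (simp add: c_def s_def D_def power2_eq_square power3_eq_cube)
qed

lemma has_real_derivative_psi_sq: "((\<lambda>t. psi t ^ 2) has_real_derivative psi_sq_deriv x) (at x)"
  unfolding psi_sq_deriv_def
  by (rule derivative_eq_intros refl has_real_derivative_psi)+ simp

lemma continuous_on_psi_sq_deriv: "continuous_on S psi_sq_deriv"
  unfolding psi_sq_deriv_def by (intro continuous_intros) auto

lemma psi_sq_deriv_nonneg: "t \<in> {0..pi/2} \<Longrightarrow> psi_sq_deriv t \<ge> 0"
  unfolding psi_sq_deriv_def
  using psi_nonneg[of t] one_minus_xi_cos_sq_pos[of t] psi_den_pos[of t] xi_pos
  by (auto intro!: mult_nonneg_nonneg divide_nonneg_pos cos_ge_zero sin_ge_zero)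

lemma psi_0: "psi 0 = 0"
  by (simp add: psi_def)

lemma psi_pi_half: "psi (pi/2) = 1"
  using xi_mult_eta by (simp add: psi_def radicand_def psi_den_def)

lemma Beta_has_integral_psi_subst:
  assumes a: "a > 0"
  shows "((\<lambda>t. (psi t ^ 2) powr (a - 1) * (1 - psi t ^ 2) powr (1/2 - 1) * psi_sq_deriv t)
    has_integral Beta a (1/2)) {0..pi/2}"
proof -
  let ?f = "\<lambda>u::real. u powr (a - 1) * (1 - u) powr (1/2 - 1)"
  let ?g = "\<lambda>t. psi t ^ 2"
  have lbint: "(LBINT x. h x * indicator S x) = (LINT x:S|lborel. (h x :: real))" for h S
    by (simp add: set_lebesgue_integral_def mult.commute)
  have int: "set_integrable lborel {?g 0..?g (pi/2)} ?f"
    using integrable_Beta[OF a, of "1/2"] by (simp add: psi_0 psi_pi_half)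
  note subst = integral_substitution[where g = ?g and g' = psi_sq_deriv and f = ?f and a = 0 and b = "pi/2",
      OF int has_real_derivative_psi_sq continuous_on_psi_sq_deriv psi_sq_deriv_nonneg]
  have si: "set_integrable lborel {0..pi/2} (\<lambda>x. ?f (?g x) * psi_sq_deriv x)"
    using subst(1) by simp
  have "integral {0..1} ?f = Beta a (1/2)"
    using has_integral_Beta_real[OF a, of "1/2"] by (simp add: has_integral_iff)
  moreover have "(LINT x:{0..1}|lborel. ?f x) = integral {0..1} ?f"
    using set_borel_integral_eq_integral(2)[OF integrable_Beta[OF a, of "1/2"]] by simp
  moreover have "(LINT x:{0..pi/2}|lborel. ?f (?g x) * psi_sq_deriv x)
      = integral {0..pi/2} (\<lambda>x. ?f (?g x) * psi_sq_deriv x)"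
    using set_borel_integral_eq_integral(2)[OF si] by simp
  moreover have "(\<lambda>x. ?f (?g x) * psi_sq_deriv x) integrable_on {0..pi/2}"
    using set_borel_integral_eq_integral(1)[OF si] by simp
  ultimately show ?thesis
    using subst(2) unfolding psi_0 psi_pi_half lbint
    by (simp add: has_integral_iff)
qed

lemma one_minus_psi_sq: "1 - psi t ^ 2 = xi * (4 * cos t * (1 - xi * cos t ^ 2) / psi_den t ^ 2) ^ 2"
proof -
  define c s D E where "c = cos t" and "s = sin t" and "D = psi_den t" and "E = radicand t"
  have "c * c + s * s = 1" "E = eta - xi * (c * c)" "D = 1 + xi * (c * c)"
    by (simp_all add: c_def s_def E_def D_def radicand_def psi_den_def power2_eq_square)
  then have A: "(D * D) * (D * D) - (xi * (s * s) * E) * (xi * (s * s) * E)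
      = 16 * xi * (c * c) * ((1 - xi * (c * c)) * (1 - xi * (c * c)))"
    using xi_mult_eta xi_plus_eta by algebra
  have "D > 0"
    by (simp add: D_def psi_den_pos)
  have "1 - psi t ^ 2 = ((D * D) * (D * D) - (xi * (s * s) * E) * (xi * (s * s) * E)) / ((D * D) * (D * D))"
    using \<open>D > 0\<close> by (simp add: psi_def s_def E_def D_def field_simps power2_eq_square)
  also have "\<dots> = xi * (4 * c * (1 - xi * (c * c)) / (D * D)) ^ 2"
    unfolding A using \<open>D > 0\<close> by (simp add: field_simps power2_eq_square)
  finally show ?thesis
    by (simp add: c_def D_def power2_eq_square)
qed

lemma Beta_integrand_psi_subst:
  assumes t: "0 < t" "t < pi/2"
  shows "(psi t ^ 2) powr (a - 1) * (1 - psi t ^ 2) powr (1/2 - 1) * psi_sq_deriv t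
    = 8 * sqrt xi * sin t / psi_den t * psi t powr (2 * a - 1)"
proof -
  define c s D where "c = cos t" and "s = sin t" and "D = psi_den t"
  have c: "c > 0" and s: "s > 0"
    using t by (auto simp: c_def s_def intro!: cos_gt_zero sin_gt_zero)
  have D: "D > 0"
    by (simp add: D_def psi_den_pos)
  have psi_pos: "psi t > 0"
    using s radicand_pos[of t] xi_pos by (simp add: psi_def s_def)
  have om: "1 - xi * (c * c) > 0"
    using one_minus_xi_cos_sq_pos[of t] by (simp add: c_def power2_eq_square)
  define w where "w = sqrt xi * (4 * c * (1 - xi * (c * c)) / (D * D))"
  have w: "w > 0"
    unfolding w_def using c om D xi_pos by simp
  have "1 - psi t ^ 2 = w ^ 2"
    unfolding one_minus_psi_sq w_def power_mult_distrib c_def D_def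
    using xi_pos by (simp add: power2_eq_square)
  then have p2: "(1 - psi t ^ 2) powr (1/2 - 1) = 1 / w"
    using w by (simp add: powr_powr powr_minus_divide)
  have p1: "(psi t ^ 2) powr (a - 1) * psi t = psi t powr (2 * a - 1)"
  proof -
    have "psi t ^ 2 = psi t powr 2"
      using psi_pos by simp
    then have "(psi t ^ 2) powr (a - 1) = psi t powr (2 * a - 2)"
      by (simp add: powr_powr algebra_simps)
    moreover have "psi t powr (2 * a - 1) = psi t powr ((2 * a - 2) + 1)"
      by simp
    ultimately show ?thesis
      unfolding powr_add using psi_pos by simp
  qed
  have "(psi t ^ 2) powr (a - 1) * (1 - psi t ^ 2) powr (1/2 - 1) * psi_sq_deriv t
      = ((psi t ^ 2) powr (a - 1) * psi t) * (32 * xi * c * s * (1 - xi * (c * c)) / (w * (D * D * D)))"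
    unfolding p2 psi_sq_deriv_def c_def s_def D_def by (simp add: field_simps power2_eq_square power3_eq_cube)
  also have "32 * xi * c * s * (1 - xi * (c * c)) / (w * (D * D * D)) = 8 * sqrt xi * s / D"
  proof -
    define q where "q = sqrt xi"
    have q: "q > 0" "xi = q * q"
      using xi_pos by (simp_all add: q_def)
    then have "1 - q * q * (c * c) > 0"
      using om by simp
    then show ?thesis
      unfolding w_def q_def[symmetric] q(2) using c D q(1) by (simp add: field_simps)
  qed
  finally show ?thesis
    unfolding p1 s_def D_def by simp
qed

lemma sqrt_psi: "sin t \<ge> 0 \<Longrightarrow> sqrt (psi t) = sqrt xi * sin t * sqrt (radicand t) / psi_den t"
  unfolding psi_def using psi_den_pos[of t] by (simp add: real_sqrt_mult real_sqrt_divide)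

lemma has_integral_Beta_1_4:
  "((\<lambda>t. 8 / sqrt (radicand t)) has_integral Beta (1/4) (1/2)) {0..pi/2}"
proof (rule has_integral_spike_finite[OF _ _ Beta_has_integral_psi_subst])
  fix t assume "t \<in> {0..pi/2} - {0, pi/2}"
  then have t: "0 < t" "t < pi/2"
    by auto
  then have s: "sin t > 0"
    by (intro sin_gt_zero) auto
  then have "psi t > 0"
    unfolding psi_def using radicand_pos[of t] xi_pos by simp
  then have "psi t powr (2 * (1/4) - 1) = 1 / sqrt (psi t)"
    by (simp add: powr_minus_divide powr_half_sqrt[symmetric])
  then show "8 / sqrt (radicand t) = (psi t ^ 2) powr (1/4 - 1) * (1 - psi t ^ 2) powr (1/2 - 1) * psi_sq_deriv t"
    unfolding Beta_integrand_psi_subst[OF t] sqrt_psi[OF less_imp_le[OF s]]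
    using s psi_den_pos[of t] radicand_pos[of t] xi_pos by (simp add: field_simps)
qed simp_all

lemma has_integral_Beta_3_4:
  "((\<lambda>t. 8 * xi * sin t ^ 2 * sqrt (radicand t) / psi_den t ^ 2) has_integral Beta (3/4) (1/2)) {0..pi/2}"
proof (rule has_integral_spike_finite[OF _ _ Beta_has_integral_psi_subst])
  fix t assume "t \<in> {0..pi/2} - {0, pi/2}"
  then have t: "0 < t" "t < pi/2"
    by auto
  then have s: "sin t > 0"
    by (intro sin_gt_zero) auto
  then have "psi t > 0"
    unfolding psi_def using radicand_pos[of t] xi_pos by simp
  then have "psi t powr (2 * (3/4) - 1) = sqrt xi * sin t * sqrt (radicand t) / psi_den t"
    using sqrt_psi[OF less_imp_le[OF s]] by (simp add: powr_half_sqrt)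
  then show "8 * xi * sin t ^ 2 * sqrt (radicand t) / psi_den t ^ 2
      = (psi t ^ 2) powr (3/4 - 1) * (1 - psi t ^ 2) powr (1/2 - 1) * psi_sq_deriv t"
    unfolding Beta_integrand_psi_subst[OF t]
    using s psi_den_pos[of t] radicand_pos[of t] xi_pos by (simp add: field_simps power2_eq_square)
qed simp_all

lemma cos_moment_0: "cos_moment 0 = Beta (1/4) (1/2) / 8"
proof -
  have "((\<lambda>x. 8 / sqrt (radicand x)) has_integral 8 * cos_moment 0) {0..pi/2}"
    using has_integral_mult_right[OF cos_moment_has_integral[of 0], of 8] by simp
  from has_integral_unique[OF this has_integral_Beta_1_4] show ?thesis
    by simp
qed

text \<open>This function vanishes at \<open>0\<close> and \<open>pi/2\<close>; its derivative combines the integrands of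
  \<open>cos_moment 0\<close>, \<open>cos_moment 1\<close> and the second Beta integral.\<close>
lemma has_real_derivative_cos_moment_1_certificate:
  "((\<lambda>t. 4 * xi * (cos t * sin t) * sqrt (radicand t) / psi_den t) has_real_derivative
      4 / sqrt (radicand x) - 8 * xi * sin x ^ 2 * sqrt (radicand x) / psi_den x ^ 2
      - 4 * xi * (cos x ^ 2 / sqrt (radicand x))) (at x)"
proof -
  define c s r D where "c = cos x" and "s = sin x" and "r = sqrt (radicand x)" and "D = psi_den x"
  have "((\<lambda>t. 4 * xi * (cos t * sin t) * sqrt (radicand t) / psi_den t) has_real_derivative
      ((4 * xi * ((c * c - s * s) * r + (c * s) * (xi * c * s / r))) * D - (4 * xi * (c * s) * r) * (- 2 * xi * c * s))
        / (D * D)) (at x)"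
    by (rule derivative_eq_intros refl has_real_derivative_sqrt_radicand has_real_derivative_psi_den | simp)+
      (simp add: c_def s_def r_def D_def algebra_simps)
  moreover have "((4 * xi * ((c * c - s * s) * r + (c * s) * (xi * c * s / r))) * D - (4 * xi * (c * s) * r) * (- 2 * xi * c * s))
        / (D * D) = 4 / r - 8 * xi * (s * s) * r / (D * D) - 4 * xi * (c * c) / r"
  proof -
    have r: "r > 0" "r * r = eta - xi * (c * c)"
      using radicand_pos[of x] by (simp_all add: r_def c_def radicand_def power2_eq_square)
    have D: "D > 0" "D = 1 + xi * (c * c)"
      using psi_den_pos[of x] by (simp_all add: D_def c_def psi_den_def power2_eq_square)
    have "c * c + s * s = 1"
      unfolding c_def s_def by (rule sin_cos_squared_add3)
    then have H: "4 * xi * ((c * c - s * s) * (r * r) * D + c * s * (xi * c * s) * D + c * s * (r * r) * (2 * xi * c * s))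
        = 4 * (D * D) - 8 * xi * (s * s) * (r * r) - 4 * xi * (c * c) * (D * D)"
      using r(2) D(2) xi_mult_eta xi_plus_eta by algebra
    have "((4 * xi * ((c * c - s * s) * r + (c * s) * (xi * c * s / r))) * D - (4 * xi * (c * s) * r) * (- 2 * xi * c * s))
        / (D * D)
      = 4 * xi * ((c * c - s * s) * (r * r) * D + c * s * (xi * c * s) * D + c * s * (r * r) * (2 * xi * c * s)) / (r * (D * D))"
      using r(1) D(1) by (simp add: field_simps)
    also have "\<dots> = 4 / r - 8 * xi * (s * s) * r / (D * D) - 4 * xi * (c * c) / r"
      unfolding H using r(1) D(1) by (simp add: field_simps)
    finally show ?thesis .
  qed
  ultimately show ?thesis
    by (simp add: c_def s_def r_def D_def power2_eq_square)
qed

lemma cos_moment_1: "xi * cos_moment 1 = Beta (1/4) (1/2) / 8 - Beta (3/4) (1/2) / 4"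
proof -
  have "((\<lambda>x. 4 / sqrt (radicand x) - 8 * xi * sin x ^ 2 * sqrt (radicand x) / psi_den x ^ 2
      - 4 * xi * (cos x ^ 2 / sqrt (radicand x))) has_integral 0) {0..pi/2}"
    by (rule fundamental_theorem_of_calculus_zero[OF _ has_real_derivative_cos_moment_1_certificate]) auto
  moreover have "((\<lambda>x. 4 / sqrt (radicand x) - 8 * xi * sin x ^ 2 * sqrt (radicand x) / psi_den x ^ 2
      - 4 * xi * (cos x ^ 2 / sqrt (radicand x))) has_integral
      4 * cos_moment 0 - Beta (3/4) (1/2) - 4 * xi * cos_moment 1) {0..pi/2}"
    using has_integral_mult_right[OF cos_moment_has_integral[of 0], of 4]
      has_integral_mult_right[OF cos_moment_has_integral[of 1], of "4 * xi"]
    by (intro has_integral_diff has_integral_Beta_3_4) simp_all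
  ultimately have "4 * cos_moment 0 - Beta (3/4) (1/2) - 4 * xi * cos_moment 1 = 0"
    using has_integral_unique by blast
  then show ?thesis
    unfolding cos_moment_0 by simp
qed

definition cf_limit :: real where
  "cf_limit = (Gamma (1/4) / Gamma (3/4)) ^ 2"

lemma cf_limit_eq_Beta: "cf_limit = 4 * Beta (1/4) (1/2) / Beta (3/4) (1/2)"
  and Beta_quarter_product: "Beta (1/4) (1/2) * Beta (3/4) (1/2) = 4 * pi"
  and Beta_3_4_pos: "Beta (3/4) (1/2) > (0::real)"
proof -
  have g1: "Gamma (1/4::real) > 0" and g3: "Gamma (3/4::real) > 0"
    by auto
  have n1: "Gamma (1/4::real) \<noteq> 0" and n3: "Gamma (3/4::real) \<noteq> 0"
    using g1 g3 by linarith+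
  have "(1/4::real) \<notin> \<int>\<^sub>\<le>\<^sub>0"
    using nonpos_Ints_nonpos[of "1/4::real"] by force
  then have g5: "Gamma (5/4::real) = 1/4 * Gamma (1/4)"
    using Gamma_plus1[of "1/4::real"] by simp
  have b1: "Beta (1/4) (1/2) = Gamma (1/4) * sqrt pi / Gamma (3/4)"
    and b3: "Beta (3/4) (1/2) = Gamma (3/4) * sqrt pi / Gamma (5/4)"
    by (simp_all add: Beta_def Gamma_one_half_real)
  show "Beta (3/4) (1/2) > (0::real)"
    unfolding b3 using g3 g5 g1 by auto
  show "cf_limit = 4 * Beta (1/4) (1/2) / Beta (3/4) (1/2)"
    unfolding cf_limit_def b1 b3 g5 using n1 n3 by (simp add: field_simps power2_eq_square)
  show "Beta (1/4) (1/2) * Beta (3/4) (1/2) = 4 * pi"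
    unfolding b1 b3 g5 using n1 n3 by (simp add: field_simps)
qed

definition cf_remainder :: "nat \<Rightarrow> real" where
  "cf_remainder n = cf_limit * cf_q n - cf_p n"

definition remainder_scale :: real where
  "remainder_scale = 32 / Beta (3/4) (1/2)"

definition moment_solution :: "nat \<Rightarrow> real" where
  "moment_solution n = remainder_scale * odd_prod n * xi ^ (n + 1) * cos_moment (n + 1)"

lemma moment_solution_rec:
  "moment_solution (Suc (Suc n))
    = 12 * (real n + 2) * moment_solution (Suc n) + - ((2 * real n + 3)^2) * moment_solution n"
proof -
  have v: "(2 * real n + 5) * xi * cos_moment (n + 3)
      = 12 * (real n + 2) * cos_moment (n + 2) - (2 * real n + 3) * eta * cos_moment (n + 1)"
    using cos_moment_recurrence[of "n + 1"] by (simp add: algebra_simps numeral_eq_Suc)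
  have "moment_solution (Suc (Suc n)) = remainder_scale * odd_prod n * (2 * real n + 3) * xi ^ (n + 2)
      * ((2 * real n + 5) * xi * cos_moment (n + 3))"
    by (simp add: moment_solution_def odd_prod_Suc algebra_simps numeral_eq_Suc)
  also have "\<dots> = 12 * (real n + 2) * (remainder_scale * (odd_prod n * (2 * real n + 3)) * xi ^ (n + 2) * cos_moment (n + 2))
      - (2 * real n + 3)^2 * (remainder_scale * odd_prod n * (xi ^ (n + 2) * eta) * cos_moment (n + 1))"
    unfolding v by (simp add: algebra_simps power2_eq_square)
  also have "xi ^ (n + 2) * eta = xi ^ (n + 1)"
    using xi_mult_eta by (simp add: algebra_simps)
  finally show ?thesis
    by (simp add: moment_solution_def odd_prod_Suc numeral_eq_Suc algebra_simps)
qed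

lemma moment_solution_0: "moment_solution 0 = cf_limit - 8"
proof -
  have "moment_solution 0 = remainder_scale * (xi * cos_moment 1)"
    by (simp add: moment_solution_def odd_prod_0)
  also have "\<dots> = cf_limit - 8"
    unfolding cos_moment_1 remainder_scale_def cf_limit_eq_Beta
    using Beta_3_4_pos by (simp add: field_simps)
  finally show ?thesis .
qed

lemma moment_solution_1: "moment_solution 1 = 11 * cf_limit - 96"
proof -
  have V2: "3 * xi * cos_moment 2 = 12 * cos_moment 1 - eta * cos_moment 0"
    using cos_moment_recurrence[of 0] by (simp add: algebra_simps numeral_eq_Suc)
  have "moment_solution 1 = remainder_scale * xi * (3 * xi * cos_moment 2)"
    by (simp add: moment_solution_def odd_prod_Suc odd_prod_0 power2_eq_square algebra_simps numeral_eq_Suc)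
  also have "\<dots> = 12 * moment_solution 0 - remainder_scale * (xi * eta) * cos_moment 0"
    unfolding V2 by (simp add: moment_solution_def odd_prod_0 algebra_simps)
  also have "\<dots> = 11 * cf_limit - 96"
    unfolding xi_mult_eta moment_solution_0 using Beta_3_4_pos
    by (simp add: cos_moment_0 remainder_scale_def cf_limit_eq_Beta field_simps)
  finally show ?thesis .
qed

lemma cf_remainder_eq: "cf_remainder n = moment_solution n"
proof (rule sym, rule second_order_recurrence_unique[of moment_solution cf_remainder
      "\<lambda>n. 12 * (real n + 2)" "\<lambda>n. - ((2 * real n + 3)^2)", OF _ _ moment_solution_rec])
  show "cf_remainder (Suc (Suc n))
      = 12 * (real n + 2) * cf_remainder (Suc n) + - ((2 * real n + 3)^2) * cf_remainder n" for n
    unfolding cf_remainder_def cf_p_rec cf_q_rec by (simp add: algebra_simps)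
qed (simp_all add: moment_solution_0 moment_solution_1[simplified] cf_remainder_def cf_a_def cf_b_def)

lemma cf_remainder_pos: "cf_remainder n > 0"
  unfolding cf_remainder_eq moment_solution_def remainder_scale_def
  using Beta_3_4_pos odd_prod_pos[of n] xi_pos cos_moment_pos[of "n + 1"] by simp

lemma cf_remainder_det: "cf_q (Suc n) * cf_remainder n - cf_q n * cf_remainder (Suc n) = 8 * odd_prod n ^ 2"
  using cf_det[of n] unfolding cf_remainder_def by (simp add: algebra_simps)

lemma contracting_recurrence_tendsto_zero:
  fixes y e :: "nat \<Rightarrow> real"
  assumes r: "0 < r" "r < 1"
    and rec: "\<And>n. y (Suc n) = r * y n + r * e n" and e: "e \<longlonglongrightarrow> 0"
  shows "y \<longlonglongrightarrow> 0"
proof (rule LIMSEQ_I)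
  fix \<epsilon> :: real assume \<epsilon>: "0 < \<epsilon>"
  define d where "d = \<epsilon> * (1 - r) / (2 * r)"
  have d: "d > 0"
    unfolding d_def using \<epsilon> r by simp
  obtain N where N: "\<And>n. n \<ge> N \<Longrightarrow> norm (e n) < d"
    using LIMSEQ_D[OF e d] by auto
  have bound: "\<bar>y (N + k)\<bar> \<le> r ^ k * \<bar>y N\<bar> + \<epsilon> / 2" for k
  proof (induction k)
    case 0
    then show ?case using \<epsilon> by simp
  next
    case (Suc k)
    have "\<bar>y (N + Suc k)\<bar> \<le> r * \<bar>y (N + k)\<bar> + r * \<bar>e (N + k)\<bar>"
      using rec[of "N + k"] abs_triangle_ineq[of "r * y (N + k)" "r * e (N + k)"] r
      by (simp add: abs_mult)
    also have "\<dots> \<le> r * (r ^ k * \<bar>y N\<bar> + \<epsilon> / 2) + r * d"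
      using Suc r N[of "N + k"] by (intro add_mono mult_left_mono) auto
    also have "\<dots> = r ^ Suc k * \<bar>y N\<bar> + \<epsilon> / 2"
      unfolding d_def using r by (simp add: field_simps)
    finally show ?case .
  qed
  have "(\<lambda>k. r ^ k * \<bar>y N\<bar>) \<longlonglongrightarrow> 0"
    using r by (intro tendsto_mult_left_zero LIMSEQ_power_zero) auto
  then obtain K where K: "\<And>k. k \<ge> K \<Longrightarrow> r ^ k * \<bar>y N\<bar> < \<epsilon> / 2"
    using LIMSEQ_D[of _ 0 "\<epsilon> / 2"] \<epsilon> by force
  have "\<bar>y n\<bar> < \<epsilon>" if "n \<ge> N + K" for n
  proof -
    have "\<bar>y n\<bar> \<le> r ^ (n - N) * \<bar>y N\<bar> + \<epsilon> / 2"
      using bound[of "n - N"] that by simp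
    moreover have "r ^ (n - N) * \<bar>y N\<bar> < \<epsilon> / 2"
      using K that by simp
    ultimately show ?thesis
      by linarith
  qed
  then show "\<exists>n0. \<forall>n\<ge>n0. norm (y n - 0) < \<epsilon>"
    by auto
qed

lemma contracting_recurrence_tendsto:
  fixes z u :: "nat \<Rightarrow> real"
  assumes r: "0 < r" "r < 1"
    and rec: "\<And>n. z (Suc n) = r * z n + r * u n" and u: "u \<longlonglongrightarrow> A"
  shows "z \<longlonglongrightarrow> r * A / (1 - r)"
proof -
  have "(\<lambda>n. z n - r * A / (1 - r)) \<longlonglongrightarrow> 0"
  proof (rule contracting_recurrence_tendsto_zero[OF r])
    show "z (Suc n) - r * A / (1 - r) = r * (z n - r * A / (1 - r)) + r * (u n - A)" for n
      unfolding rec using r by (simp add: field_simps)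
    show "(\<lambda>n. u n - A) \<longlonglongrightarrow> 0"
      using u by (simp add: LIM_zero)
  qed
  then show ?thesis
    by (simp add: LIM_zero_iff)
qed

text \<open>The Casorati determinant turns \<open>cf_q n / cf_remainder n\<close> into a sum over the consecutive
  products of remainders, whose asymptotics are those of the moment products.\<close>
lemma cf_q_div_remainder_asymp:
  defines "A \<equiv> 16 / (remainder_scale^2 * xi^3 * (moment_scale^2 * pi))"
  shows "(\<lambda>n. cf_q n / cf_remainder n * (xi^2) ^ n) \<longlonglongrightarrow> xi^2 * A / (1 - xi^2)"
proof (rule contracting_recurrence_tendsto)
  let ?u = "\<lambda>n. 8 * odd_prod n ^ 2 / (cf_remainder n * cf_remainder (Suc n)) * (xi^2) ^ n"
  show "0 < xi^2" "xi^2 < 1"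
    using xi_pos xi_less_1 by (simp_all add: power_less_one_iff)
  show "cf_q (Suc n) / cf_remainder (Suc n) * (xi^2) ^ Suc n
      = xi^2 * (cf_q n / cf_remainder n * (xi^2) ^ n) + xi^2 * ?u n" for n
  proof -
    have "cf_q (Suc n) / cf_remainder (Suc n)
        = cf_q n / cf_remainder n + 8 * odd_prod n ^ 2 / (cf_remainder n * cf_remainder (Suc n))"
      unfolding cf_remainder_det[symmetric]
      using cf_remainder_pos[of n] cf_remainder_pos[of "Suc n"] by (simp add: field_simps)
    then show ?thesis
      by (simp add: algebra_simps)
  qed
  have "?u n = 8 / (remainder_scale^2 * xi^3 * ((2 * real n + 3) * cos_moment (n + 1) * cos_moment (n + 2)))" for n
  proof -
    define P where "P = (2 * real n + 3) * cos_moment (n + 1) * cos_moment (n + 2)"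
    define Q where "Q = odd_prod n ^ 2 * xi ^ (2 * n)"
    have Q: "Q \<noteq> 0"
      unfolding Q_def using odd_prod_pos[of n] xi_pos by simp
    have "cf_remainder n * cf_remainder (Suc n) = (remainder_scale^2 * xi^3 * P) * Q"
      unfolding cf_remainder_eq moment_solution_def odd_prod_Suc P_def Q_def
      by (simp add: power2_eq_square power_add algebra_simps numeral_eq_Suc)
    then have "?u n = 8 * Q / ((remainder_scale^2 * xi^3 * P) * Q)"
      by (simp add: Q_def power_mult)
    then show ?thesis
      using Q by (simp add: P_def)
  qed
  moreover have "(\<lambda>n. 8 / (remainder_scale^2 * xi^3 * ((2 * real n + 3) * cos_moment (n + 1) * cos_moment (n + 2))))
      \<longlonglongrightarrow> 8 / (remainder_scale^2 * xi^3 * (moment_scale^2 * (pi / 2)))"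
    using moment_scale_pos xi_pos Beta_3_4_pos unfolding remainder_scale_def
    by (intro tendsto_intros cos_moment_product_limit) auto
  ultimately show "?u \<longlonglongrightarrow> A"
    by (simp add: A_def)
qed

lemma cf_error_asymp:
  "(\<lambda>n. (cf_limit - cf_p n / cf_q n) / (4 * cf_limit * (xi^2) ^ Suc n)) \<longlonglongrightarrow> 1"
proof -
  define A where "A = 16 / (remainder_scale^2 * xi^3 * (moment_scale^2 * pi))"
  have const: "4 * cf_limit * xi^2 * (xi^2 * A / (1 - xi^2)) = 1"
  proof -
    have x2: "1 - xi^2 > 0"
      using xi_pos xi_less_1 by (simp add: power_less_one_iff)
    have scale: "moment_scale^2 = 1 / (eta - xi)"
      using eta_minus_xi_pos by (simp add: moment_scale_def power_divide)
    have A_eq: "A = (eta - xi) * Beta (3/4) (1/2)^2 / (64 * xi^3 * pi)"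
      unfolding A_def remainder_scale_def scale using xi_pos Beta_3_4_pos eta_minus_xi_pos
      by (simp add: field_simps power2_eq_square)
    have "4 * cf_limit * xi^2 * (xi^2 * A / (1 - xi^2))
        = (Beta (1/4) (1/2) * Beta (3/4) (1/2)) * (xi * (eta - xi)) / (4 * pi * (1 - xi^2))"
      unfolding cf_limit_eq_Beta A_eq using xi_pos x2 Beta_3_4_pos
      by (simp add: field_simps power2_eq_square power3_eq_cube)
    also have "xi * (eta - xi) = 1 - xi^2"
      using xi_mult_eta by (simp add: algebra_simps power2_eq_square)
    also have "Beta (1/4) (1/2) * Beta (3/4) (1/2) * (1 - xi^2) / (4 * pi * (1 - xi^2)) = 1"
      unfolding Beta_quarter_product using x2 by simp
    finally show ?thesis .
  qed
  have "(\<lambda>n. 4 * cf_limit * xi^2 * (cf_q n / cf_remainder n * (xi^2) ^ n))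
      \<longlonglongrightarrow> 4 * cf_limit * xi^2 * (xi^2 * A / (1 - xi^2))"
    unfolding A_def by (intro tendsto_intros cf_q_div_remainder_asymp)
  then have "(\<lambda>n. inverse (4 * cf_limit * xi^2 * (cf_q n / cf_remainder n * (xi^2) ^ n))) \<longlonglongrightarrow> inverse 1"
    unfolding const by (rule tendsto_inverse) simp
  moreover have "inverse (4 * cf_limit * xi^2 * (cf_q n / cf_remainder n * (xi^2) ^ n))
      = (cf_limit - cf_p n / cf_q n) / (4 * cf_limit * (xi^2) ^ Suc n)" for n
  proof -
    have "cf_limit - cf_p n / cf_q n = cf_remainder n / cf_q n"
      unfolding cf_remainder_def using cf_q_pos[of n] by (simp add: field_simps)
    then show ?thesis
      using cf_q_pos[of n] cf_remainder_pos[of n] by (simp add: field_simps)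
  qed
  ultimately show ?thesis
    by simp
qed

lemma one_plus_sqrt2_power: "4 * cf_limit / (1 + sqrt 2) ^ (4 * n + 4) = 4 * cf_limit * (xi^2) ^ Suc n"
proof -
  have "(1 + sqrt 2) ^ 2 = (eta::real)"
    unfolding eta_def by (simp add: power2_eq_square algebra_simps)
  then have power: "(1 + sqrt 2) ^ (4 * n + 4) = eta ^ (2 * Suc n)"
    by (metis mult.commute mult_Suc_right numeral_Bit0 power_mult add.commute mult_2_right)
  have "(xi^2) ^ Suc n * eta ^ (2 * Suc n) = (xi * eta) ^ (2 * Suc n)"
    by (simp only: power_mult power_mult_distrib)
  then have "(xi^2) ^ Suc n * eta ^ (2 * Suc n) = 1"
    by (simp add: xi_mult_eta)
  moreover have "eta \<noteq> 0"
    using xi_mult_eta by auto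
  ultimately have "(xi^2) ^ Suc n = 1 / eta ^ (2 * Suc n)"
    by (simp add: eq_divide_eq)
  then show ?thesis
    unfolding power by simp
qed

theorem theorem6p1:
  shows "(cf_convergent cf_a cf_b \<longlonglongrightarrow> (Gamma (1/4) / Gamma (3/4)) ^ 2)
       \<and> (\<lambda>n. (Gamma (1/4) / Gamma (3/4)) ^ 2 - cf_convergent cf_a cf_b n)
           \<sim>[sequentially] (\<lambda>n. 4 * (Gamma (1/4) / Gamma (3/4)) ^ 2 / (1 + sqrt 2) ^ (4 * n + 4))"
proof -
  have error: "(\<lambda>n. cf_limit - cf_convergent cf_a cf_b n) \<sim>[sequentially] (\<lambda>n. 4 * cf_limit * (xi^2) ^ Suc n)"
    using asymp_equivI'[OF cf_error_asymp] by (simp add: cf_convergent_eq)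
  then have asymp: "(\<lambda>n. cf_limit - cf_convergent cf_a cf_b n)
      \<sim>[sequentially] (\<lambda>n. 4 * cf_limit / (1 + sqrt 2) ^ (4 * n + 4))"
    by (simp only: one_plus_sqrt2_power)
  have "(\<lambda>n. 4 * cf_limit * (xi^2) ^ Suc n) \<longlonglongrightarrow> 0"
    using xi_pos xi_less_1
    by (intro tendsto_mult_right_zero LIMSEQ_Suc LIMSEQ_power_zero) (simp add: power_less_one_iff)
  then have "(\<lambda>n. cf_limit - cf_convergent cf_a cf_b n) \<longlonglongrightarrow> 0"
    using asymp_equiv_tendsto_transfer[OF asymp_equiv_symI[OF error]] by blast
  then have "(\<lambda>n. cf_limit - (cf_limit - cf_convergent cf_a cf_b n)) \<longlonglongrightarrow> cf_limit - 0"
    by (intro tendsto_intros)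
  then have "cf_convergent cf_a cf_b \<longlonglongrightarrow> cf_limit"
    by simp
  with asymp show ?thesis
    unfolding cf_limit_def by simp
qed

end
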